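(* Let $\Omega\subset\mathbb{R}^2$ and let $\Omega^\diamond=\{(p,q)\in\mathbb{R}^{2*}\mid px-qy\ge1\ \forall(x,y)\in\Omega\}$ be its antipolar set. Let $\gamma\colon(-1,1)\to\mathbb{R}^{2*}$ be a continuously differentiable curve such that \[ \gamma(0)=\omega^\diamond\in\Omega^\diamond, \qquad \dot{\gamma}(0)\notin\{\lambda\omega^\diamond\mid \lambda\in\mathbb{R}\}. \] Assume that there exists $\delta>0$ such that for every $\alpha\in(0,\delta)$ \begin{enumerate} \item[---] $(1-\alpha)\omega^\diamond\in\Omega^\diamond,$ \item[---] $\gamma(-\alpha)\in\Omega^\diamond,\quad\gamma(\alpha)\in\Omega^\diamond$. \end{enumerate} Then $\omega^\diamond\in\mathrm{int}\,\Omega^\diamond$. Conversely, if there is a continuously differentiable curve $\gamma\colon(-1,1)\to\mathbb{R}^{2*}$ with $\gamma(0)=\omega^\diamond$ and $\dot{\gamma}(0)\notin\{\lambda\omega^\diamond\mid \lambda\in\mathbb{R}\}$ for which no such $\delta>0$ exists, then the point $\omega^\diamond$ lies on the boundary $\partial\Omega^\diamond$ of the antipolar set.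
   Context: $\Omega\subset\mathbb{R}^2$ is a non-empty, convex, closed set not containing the origin and satisfying the ray property $\lambda\Omega\subset\Omega$ for all $\lambda>1$ (Assumption (i)), and $\Omega$ is strictly separated from the origin, so that its antipolar set $\Omega^\diamond=\{(p,q)\in\mathbb{R}^{2*}\mid px-qy\ge1\ \forall(x,y)\in\Omega\}$ is non-empty, convex and closed and also satisfies Assumption (i). Here $\mathbb{R}^{2*}$ is the dual space of $\mathbb{R}^2$. *)

theory Defs
  imports "HOL-Analysis.Analysis"
begin

text \<open>Antipolar set of \<Omega> \<subseteq> R^2; elements of the dual space R^{2*} are represented as pairs (p,q),
  with the paper's pairing (p,q)(x,y) = p x - q y.\<close>
definition antipolar :: "(real \<times> real) set \<Rightarrow> (real \<times> real) set" where
  "antipolar \<Omega> = {(p, q). \<forall>(x, y) \<in> \<Omega>. p * x - q * y \<ge> 1}"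

end

theory Submission
  imports Defs
begin

text \<open>If \<omega> is not interior to the convex antipolar set A, some nonzero functional a
  supports A at \<omega>. Since A contains the points (1-\<alpha>)\<omega> and 2\<omega> of the ray through \<omega>
  on both sides of \<omega>, we get a \<omega> = 0; since it contains \<gamma>(\<alpha>) for all small \<alpha> of
  either sign, t \<mapsto> a \<gamma>(t) has a local minimum at 0, so a \<gamma>'(0) = 0. In the plane
  two vectors annihilated by the same nonzero functional are parallel, contradicting
  the transversality of \<gamma>. Conversely, if \<omega> is interior, continuity of \<gamma> provides
  the \<delta>, so failure of the condition places \<omega> on the boundary.\<close>

lemma supporting_functional_at_non_interior:
  fixes A :: "'a::euclidean_space set"
  assumes "convex A" "w \<in> A" "w \<notin> interior A"
  obtains a where "a \<noteq> 0" "\<And>y. y \<in> A \<Longrightarrow> a \<bullet> w \<le> a \<bullet> y"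
proof (cases "interior A = {}")
  case True
  then obtain a b where "a \<noteq> 0" and flat: "A \<subseteq> {x. a \<bullet> x = b}"
    using empty_interior_subset_hyperplane[OF assms(1)] by blast
  moreover have "\<And>y. y \<in> A \<Longrightarrow> a \<bullet> y = a \<bullet> w"
    using flat assms(2) by blast
  ultimately show ?thesis
    using that by force
next
  case False
  then have "w \<notin> rel_interior A"
    using assms(3) rel_interior_nonempty_interior by blast
  then obtain a where "a \<noteq> 0" "\<And>y. y \<in> closure A \<Longrightarrow> a \<bullet> w \<le> a \<bullet> y"
    using supporting_hyperplane_relative_frontier[OF assms(1)] assms(2) closure_subset
    by (metis subsetD)
  then show ?thesis
    using closure_subset by (intro that[of a]) auto
qed

lemma inner_vector_derivative_local_min:
  fixes \<gamma> :: "real \<Rightarrow> 'a::real_inner"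
  assumes "(\<gamma> has_vector_derivative v) (at x)" "d > 0"
    and "\<And>t. \<bar>x - t\<bar> < d \<Longrightarrow> a \<bullet> \<gamma> x \<le> a \<bullet> \<gamma> t"
  shows "a \<bullet> v = 0"
proof -
  have "((\<lambda>t. a \<bullet> \<gamma> t) has_real_derivative a \<bullet> v) (at x)"
    using bounded_linear.has_vector_derivative[OF bounded_linear_inner_right assms(1)]
    by (simp add: has_real_derivative_iff_has_vector_derivative)
  then show ?thesis
    using DERIV_local_min assms(2,3) by blast
qed

lemma orthogonal_to_same_vector_imp_parallel:
  fixes a v w :: "'a::euclidean_space"
  assumes "DIM('a) = 2" "a \<noteq> 0" "w \<noteq> 0" "a \<bullet> w = 0" "a \<bullet> v = 0"
  shows "v \<in> span {w}"
proof -
  have "{x. a \<bullet> x = 0} \<subseteq> span {w}"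
    using assms by (intro card_ge_dim_independent) (auto simp: dim_hyperplane)
  then show ?thesis
    using assms(5) by blast
qed

lemma interior_if_ray_and_transversal_curve_inside:
  fixes A :: "'a::euclidean_space set"
  assumes "DIM('a) = 2" "convex A" "w \<in> A" "w \<noteq> 0" "t > 1" "t *\<^sub>R w \<in> A"
    and "(\<gamma> has_vector_derivative v) (at 0)" "\<gamma> 0 = w" "v \<notin> span {w}"
    and "\<delta> > 0" "\<And>\<alpha>. \<alpha> \<in> {0<..<\<delta>} \<Longrightarrow> (1 - \<alpha>) *\<^sub>R w \<in> A \<and> \<gamma> (-\<alpha>) \<in> A \<and> \<gamma> \<alpha> \<in> A"
  shows "w \<in> interior A"
proof (rule ccontr)
  assume "w \<notin> interior A"
  then obtain a where "a \<noteq> 0" and supp: "\<And>y. y \<in> A \<Longrightarrow> a \<bullet> w \<le> a \<bullet> y"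
    using supporting_functional_at_non_interior assms(2,3) by blast
  define \<alpha> where "\<alpha> = min (\<delta> / 2) 1"
  have "\<alpha> \<in> {0<..<\<delta>}"
    using assms(10) by (auto simp: \<alpha>_def)
  then have "a \<bullet> w \<le> a \<bullet> ((1 - \<alpha>) *\<^sub>R w)" "a \<bullet> w \<le> a \<bullet> (t *\<^sub>R w)"
    using supp assms(6,11) by blast+
  then have "\<alpha> * (a \<bullet> w) \<le> 0" "0 \<le> (t - 1) * (a \<bullet> w)"
    by (simp_all add: algebra_simps)
  with \<open>\<alpha> \<in> {0<..<\<delta>}\<close> assms(5) have "a \<bullet> w = 0"
    by (simp add: mult_le_0_iff zero_le_mult_iff)
  moreover have "a \<bullet> v = 0"
  proof (rule inner_vector_derivative_local_min[OF assms(7,10)])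
    fix s :: real
    assume "\<bar>0 - s\<bar> < \<delta>"
    then consider "s = 0" | "s \<in> {0<..<\<delta>}" | "- s \<in> {0<..<\<delta>}"
      by (cases s "0::real" rule: linorder_cases) auto
    then have "\<gamma> s \<in> A"
      by cases (use assms(3,8) assms(11)[of s] assms(11)[of "-s"] in simp_all)
    then show "a \<bullet> \<gamma> 0 \<le> a \<bullet> \<gamma> s"
      using assms(8) supp by simp
  qed
  ultimately have "v \<in> span {w}"
    using orthogonal_to_same_vector_imp_parallel assms(1,4) \<open>a \<noteq> 0\<close> by blast
  with assms(9) show False
    by blast
qed

lemma ray_and_curve_inside_near_interior_point:
  fixes A :: "'a::real_normed_vector set"
  assumes "w \<in> interior A" "isCont \<gamma> 0" "\<gamma> 0 = w"
  shows "\<exists>\<delta>>0. \<forall>\<alpha>\<in>{0<..<\<delta>}. (1 - \<alpha>) *\<^sub>R w \<in> A \<and> \<gamma> (-\<alpha>) \<in> A \<and> \<gamma> \<alpha> \<in> A"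
proof -
  have "isCont (\<lambda>\<alpha>. \<gamma> (-\<alpha>)) 0"
    using isCont_o2[where f = uminus and g = \<gamma> and a = 0] assms(2) by simp
  then have "((\<lambda>\<alpha>. (1 - \<alpha>) *\<^sub>R w) \<longlongrightarrow> w) (at 0)" "(\<gamma> \<longlongrightarrow> w) (at 0)"
    "((\<lambda>\<alpha>. \<gamma> (-\<alpha>)) \<longlongrightarrow> w) (at 0)"
    using assms(2,3) by (auto intro!: tendsto_eq_intros simp: isCont_def)
  then have "\<forall>\<^sub>F \<alpha> in at 0. (1 - \<alpha>) *\<^sub>R w \<in> interior A \<and> \<gamma> (-\<alpha>) \<in> interior A
      \<and> \<gamma> \<alpha> \<in> interior A"
    using assms(1) by (intro eventually_conj topological_tendstoD) auto
  then obtain \<delta> where "\<delta> > 0" and "\<forall>\<alpha>. \<alpha> \<noteq> 0 \<and> dist \<alpha> 0 < \<delta> \<longrightarrow>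
      (1 - \<alpha>) *\<^sub>R w \<in> interior A \<and> \<gamma> (-\<alpha>) \<in> interior A \<and> \<gamma> \<alpha> \<in> interior A"
    unfolding eventually_at by blast
  moreover have "\<alpha> \<noteq> 0 \<and> dist \<alpha> 0 < \<delta>" if "\<alpha> \<in> {0<..<\<delta>}" for \<alpha> :: real
    using that by (simp add: dist_real_def)
  ultimately show ?thesis
    using interior_subset by blast
qed

lemma antipolar_eq_Inter_halfspaces:
  "antipolar \<Omega> = (\<Inter>z\<in>\<Omega>. {pq. 1 \<le> (fst z, - snd z) \<bullet> pq})"
  unfolding antipolar_def by (fastforce simp: case_prod_beta inner_prod_def mult.commute)

lemma antipolar_convex: "convex (antipolar \<Omega>)"
  unfolding antipolar_eq_Inter_halfspaces by (intro convex_INT ballI convex_halfspace_ge)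

lemma antipolar_scaleR:
  assumes "1 \<le> t" "w \<in> antipolar \<Omega>"
  shows "t *\<^sub>R w \<in> antipolar \<Omega>"
proof (cases w)
  case (Pair p q)
  have "1 * 1 \<le> t * (p * x - q * y)" if "(x, y) \<in> \<Omega>" for x y
    using assms that unfolding antipolar_def Pair by (intro mult_mono) auto
  then show ?thesis
    unfolding antipolar_def Pair by (auto simp: algebra_simps)
qed

lemma antipolar_nonzero: "\<Omega> \<noteq> {} \<Longrightarrow> w \<in> antipolar \<Omega> \<Longrightarrow> w \<noteq> 0"
  unfolding antipolar_def by (auto simp: zero_prod_def)

lemma C1_differentiable_on_has_vector_derivative:
  "f C1_differentiable_on S \<Longrightarrow> x \<in> S \<Longrightarrow> (f has_vector_derivative vector_derivative f (at x)) (at x)"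
  by (simp add: C1_differentiable_on_eq vector_derivative_works)

theorem lemma3:
  fixes \<Omega> :: "(real \<times> real) set" and w :: "real \<times> real"
  assumes "\<Omega> \<noteq> {}" and "convex \<Omega>" and "closed \<Omega>" and "(0, 0) \<notin> \<Omega>"
    and "\<forall>t::real. t > 1 \<longrightarrow> scaleR t ` \<Omega> \<subseteq> \<Omega>"
    and "\<exists>a b c. c > 0 \<and> (\<forall>(x, y) \<in> \<Omega>. a * x + b * y \<ge> c)"
    and "w \<in> antipolar \<Omega>"
  shows "(\<forall>\<gamma> :: real \<Rightarrow> real \<times> real.
            \<gamma> C1_differentiable_on {-1<..<1} \<and> \<gamma> 0 = w
            \<and> vector_derivative \<gamma> (at 0) \<notin> {c *\<^sub>R w | c. True}
            \<and> (\<exists>\<delta>>0. \<forall>\<alpha>\<in>{0<..<\<delta>}.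
                  (1 - \<alpha>) *\<^sub>R w \<in> antipolar \<Omega> \<and> \<gamma> (-\<alpha>) \<in> antipolar \<Omega> \<and> \<gamma> \<alpha> \<in> antipolar \<Omega>)
            \<longrightarrow> w \<in> interior (antipolar \<Omega>))
       \<and> ((\<exists>\<gamma> :: real \<Rightarrow> real \<times> real.
            \<gamma> C1_differentiable_on {-1<..<1} \<and> \<gamma> 0 = w
            \<and> vector_derivative \<gamma> (at 0) \<notin> {c *\<^sub>R w | c. True}
            \<and> \<not> (\<exists>\<delta>>0. \<forall>\<alpha>\<in>{0<..<\<delta>}.
                  (1 - \<alpha>) *\<^sub>R w \<in> antipolar \<Omega> \<and> \<gamma> (-\<alpha>) \<in> antipolar \<Omega> \<and> \<gamma> \<alpha> \<in> antipolar \<Omega>))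
            \<longrightarrow> w \<in> frontier (antipolar \<Omega>))"
proof (intro conjI allI impI; elim conjE exE)
  fix \<gamma> :: "real \<Rightarrow> real \<times> real" and \<delta> :: real
  assume C1: "\<gamma> C1_differentiable_on {-1<..<1}" and "\<gamma> 0 = w" "\<delta> > 0"
    and transversal: "vector_derivative \<gamma> (at 0) \<notin> {c *\<^sub>R w | c. True}"
    and "\<forall>\<alpha>\<in>{0<..<\<delta>}. (1 - \<alpha>) *\<^sub>R w \<in> antipolar \<Omega> \<and> \<gamma> (-\<alpha>) \<in> antipolar \<Omega> \<and> \<gamma> \<alpha> \<in> antipolar \<Omega>"
  moreover have "(\<gamma> has_vector_derivative vector_derivative \<gamma> (at 0)) (at 0)"
    using C1_differentiable_on_has_vector_derivative[OF C1] by simp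
  moreover have "vector_derivative \<gamma> (at 0) \<notin> span {w}"
    using transversal by (auto simp: span_singleton)
  ultimately show "w \<in> interior (antipolar \<Omega>)"
    using interior_if_ray_and_transversal_curve_inside[where t = 2,
        OF _ antipolar_convex assms(7) antipolar_nonzero[OF assms(1,7)] _
        antipolar_scaleR[OF _ assms(7)]]
    by simp
next
  fix \<gamma> :: "real \<Rightarrow> real \<times> real"
  assume C1: "\<gamma> C1_differentiable_on {-1<..<1}" and "\<gamma> 0 = w"
    and "\<not> (\<exists>\<delta>>0. \<forall>\<alpha>\<in>{0<..<\<delta>}.
          (1 - \<alpha>) *\<^sub>R w \<in> antipolar \<Omega> \<and> \<gamma> (-\<alpha>) \<in> antipolar \<Omega> \<and> \<gamma> \<alpha> \<in> antipolar \<Omega>)"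
  moreover have "isCont \<gamma> 0"
    using C1_differentiable_on_has_vector_derivative[OF C1, of 0]
    by (simp add: has_vector_derivative_continuous)
  ultimately have "w \<notin> interior (antipolar \<Omega>)"
    using ray_and_curve_inside_near_interior_point by blast
  with assms(7) show "w \<in> frontier (antipolar \<Omega>)"
    by (simp add: frontier_def closure_subset[THEN subsetD])
qed

end
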